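(* Let $q,Q_1,\dots,Q_r$ be indeterminates and $R=\mathbb Q(q,Q_1,\dots,Q_r)$. For every multipartition $\lambda$ of $n$, $$\gamma_{\mathfrak t_\lambda}=q^{\ell(w_\lambda)}\prod_{(i,j,s)\in[\lambda]}\left(\frac{[h^{\lambda^{(s)}}_{ij}]_q}{[\ell^{\lambda^{(s)}}_{ij}]_q}\prod_{t=s+1}^r\Big((q^{j-i}Q_s-q^{\lambda^{(t)}_1}Q_t)\prod_{k=1}^{\lambda_1^{(t)}}\frac{q^{j-i}Q_s-q^{k-1-\lambda^{(t)\prime}_k}Q_t}{q^{j-i}Q_s-q^{k-\lambda^{(t)\prime}_k}Q_t}\Big)\right).$$
   Context: Ariki–Koike algebra over $R$ with parameters $q,Q_1,\dots,Q_r$ ($n,r\ge1$). Multipartition $\lambda=(\lambda^{(1)},\dots,\lambda^{(r)})$ of $n$, diagram $[\lambda]=\{(i,j,s):1\le j\le\lambda^{(s)}_i\}$; $\lambda^{(t)\prime}_k$ is the length of the $k$-th column of $\lambda^{(t)}$. Hook length $h^{\lambda^{(s)}}_{ij}=\lambda^{(s)}_i+\lambda^{(s)\prime}_j-i-j+1$ and leg length $\ell^{\lambda^{(s)}}_{ij}=\lambda^{(s)\prime}_j-i+1$. $[k]_q=1+q+\dots+q^{k-1}$, $[k]_q!=[1]_q\cdots[k]_q$, $[\lambda]_q!=\prod_{s,i}[\lambda^{(s)}_i]_q!$. Standard $\lambda$-tableaux: bijections $[\lambda]\to\{1,\dots,n\}$ increasing along rows and columns of each component; $\mathfrak S_n$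 acts on the right on entries. $\mathfrak t^\lambda$: $1,\dots,n$ along rows of component $1$, then $2$, …; $\mathfrak t_\lambda$: $1,\dots,n$ down the columns (left to right) of component $r$, then $r-1$, …, then $1$; $w_\lambda$ is defined by $\mathfrak t_\lambda=\mathfrak t^\lambda w_\lambda$, $\ell$ is Coxeter length. $\mathrm{res}_{\mathfrak t}(k)=q^{j-i}Q_c$ if $k$ is in row $i$, column $j$, component $c$. Dominance: for multipartitions $\lambda\trianglerighteq\mu$ iff $\sum_{t<s}|\lambda^{(t)}|+\sum_{j\le i}\lambda^{(s)}_j\ge\sum_{t<s}|\mu^{(t)}|+\sum_{j\le i}\mu^{(s)}_j$ for all $s,i$; for standard tableaux $\mathfrak s\trianglerighteq\mathfrak t$ iff $\mathrm{Shape}(\mathfrak s\downarrow k)\trianglerighteq\mathrm{Shape}(\mathfrak t\downarrow k)$ for all $k$ ($\mathfrak t\downarrow k$ = subtableau with entries $\le k$); $\triangleright$ means $\trianglerighteq$ and $\ne$. The scalars $\gamma_{\mathfrak t}$ ($\mathfrak t\in\mathrm{Std}(\lambda)$) are defined by $\gamma_{\mathfrak t^\lambda}=[\lambda]_q!\prod_{1\le s<t\le r}\prod_{(i,j)\in[\lambda^{(s)}]}(q^{j-i}Q_s-Q_t)$ and $\gamma_{\mathfrak t}=\frac{(q\,\mathrm{res}_{\mathfrak s}(i)-\mathrm{res}_{\mathfrak t}(i))(\mathrm{res}_{\mathfrak s}(i)-q\,\mathrm{res}_{\mathfrak t}(i))}{(\mathrm{res}_{\mathfrak s}(i)-\mathrm{res}_{\mathfrak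 t}(i))^2}\gamma_{\mathfrak s}$ whenever $\mathfrak s=\mathfrak t(i,i+1)\triangleright\mathfrak t$ with both standard. *)

theory Defs
  imports Complex_Main "HOL-Library.Poly_Mapping" "HOL-Computational_Algebra.Fraction_Field"
    "HOL-Combinatorics.Transposition"
begin

text \<open>Multivariate polynomials over the rationals in the indeterminates X_0, X_1, X_2, ...
  (monomials are finitely supported exponent vectors), and their fraction field.\<close>

type_synonym ratfun = "((nat \<Rightarrow>\<^sub>0 nat) \<Rightarrow>\<^sub>0 rat) fract"

definition Xvar :: "nat \<Rightarrow> ratfun" where
  "Xvar i = Fract (Poly_Mapping.single (Poly_Mapping.single i 1) 1) 1"

definition qv :: ratfun where "qv = Xvar 0"

definition Qv :: "nat \<Rightarrow> ratfun" where "Qv s = Xvar s"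

text \<open>A multipartition with r components is a list of r partitions; component s (1-based)
  is the list lam ! (s-1), a weakly decreasing list of positive parts.\<close>

definition is_partition :: "nat list \<Rightarrow> bool" where
  "is_partition p \<longleftrightarrow> sorted_wrt (\<ge>) p \<and> (\<forall>x\<in>set p. 0 < x)"

definition is_multipartition :: "nat \<Rightarrow> nat \<Rightarrow> nat list list \<Rightarrow> bool" where
  "is_multipartition r n lam \<longleftrightarrow> length lam = r \<and> (\<forall>p\<in>set lam. is_partition p)
     \<and> (\<Sum>p\<leftarrow>lam. sum_list p) = n"

definition rowlen :: "nat list list \<Rightarrow> nat \<Rightarrow> nat \<Rightarrow> nat" where
  "rowlen lam s i = (if 1 \<le> s \<and> s \<le> length lam \<and> 1 \<le> i \<and> i \<le> length (lam ! (s-1))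
                     then lam ! (s-1) ! (i-1) else 0)"

definition collen :: "nat list list \<Rightarrow> nat \<Rightarrow> nat \<Rightarrow> nat" where
  "collen lam s j = card {i. 1 \<le> i \<and> j \<le> rowlen lam s i}"

definition compsize :: "nat list list \<Rightarrow> nat \<Rightarrow> nat" where
  "compsize lam s = (if 1 \<le> s \<and> s \<le> length lam then sum_list (lam ! (s-1)) else 0)"

text \<open>The diagram: nodes (i, j, s) = (row, column, component).\<close>
definition diagram :: "nat list list \<Rightarrow> (nat \<times> nat \<times> nat) set" where
  "diagram lam = {(i, j, s). 1 \<le> s \<and> s \<le> length lam \<and> 1 \<le> i \<and> 1 \<le> j \<and> j \<le> rowlen lam s i}"

definition hook :: "nat list list \<Rightarrow> nat \<Rightarrow> nat \<Rightarrow> nat \<Rightarrow> nat" where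
  "hook lam s i j = rowlen lam s i + collen lam s j + 1 - i - j"

definition leg :: "nat list list \<Rightarrow> nat \<Rightarrow> nat \<Rightarrow> nat \<Rightarrow> nat" where
  "leg lam s i j = collen lam s j + 1 - i"

text \<open>A lambda-tableau is a map from nodes to entries, normalised to be 0 off the diagram.\<close>
type_synonym tableau = "nat \<times> nat \<times> nat \<Rightarrow> nat"

definition std_tableau :: "nat list list \<Rightarrow> nat \<Rightarrow> tableau \<Rightarrow> bool" where
  "std_tableau lam n t \<longleftrightarrow>
     bij_betw t (diagram lam) {1..n} \<and> (\<forall>x. x \<notin> diagram lam \<longrightarrow> t x = 0) \<and>
     (\<forall>i j s. (i, j, s) \<in> diagram lam \<and> (i, Suc j, s) \<in> diagram lam \<longrightarrow> t (i, j, s) < t (i, Suc j, s)) \<and>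
     (\<forall>i j s. (i, j, s) \<in> diagram lam \<and> (Suc i, j, s) \<in> diagram lam \<longrightarrow> t (i, j, s) < t (Suc i, j, s))"

definition act_swap :: "tableau \<Rightarrow> nat \<Rightarrow> tableau" where
  "act_swap t k = (\<lambda>x. Transposition.transpose k (Suc k) (t x))"

text \<open>t^\<lambda>: 1..n along the rows of component 1, then component 2, ...\<close>
definition t_row :: "nat list list \<Rightarrow> tableau" where
  "t_row lam = (\<lambda>(i, j, s). if (i, j, s) \<in> diagram lam then
      (\<Sum>c\<in>{1..<s}. compsize lam c) + (\<Sum>a\<in>{1..<i}. rowlen lam s a) + j else 0)"

text \<open>t_\<lambda>: 1..n down the columns (left to right) of component r, then r-1, ..., then 1.\<close>
definition t_col :: "nat list list \<Rightarrow> tableau" where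
  "t_col lam = (\<lambda>(i, j, s). if (i, j, s) \<in> diagram lam then
      (\<Sum>c\<in>{s<..length lam}. compsize lam c) + (\<Sum>b\<in>{1..<j}. collen lam s b) + i else 0)"

text \<open>w_\<lambda> with t_\<lambda> = t^\<lambda> w_\<lambda> (entry k of t^\<lambda> is replaced by
  w_\<lambda>(k)), and its Coxeter length = number of inversions.\<close>
definition w_lam :: "nat list list \<Rightarrow> nat \<Rightarrow> nat" where
  "w_lam lam k = t_col lam (inv_into (diagram lam) (t_row lam) k)"

definition coxeter_length :: "nat \<Rightarrow> (nat \<Rightarrow> nat) \<Rightarrow> nat" where
  "coxeter_length n w = card {(a, b). 1 \<le> a \<and> a < b \<and> b \<le> n \<and> w b < w a}"

definition res :: "nat list list \<Rightarrow> tableau \<Rightarrow> nat \<Rightarrow> ratfun" where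
  "res lam t k = (case inv_into (diagram lam) t k of (i, j, c) \<Rightarrow>
      qv powi (int j - int i) * Qv c)"

text \<open>Dominance of multipartitions, stated on their diagrams (sets of nodes):
  the quantity \<Sum>_{t<s} |\<lambda>^(t)| + \<Sum>_{j\<le>i} \<lambda>^(s)_j is the number of nodes
  lying in a component t < s, or in component s in a row j \<le> i.\<close>
definition partial_count :: "(nat \<times> nat \<times> nat) set \<Rightarrow> nat \<Rightarrow> nat \<Rightarrow> nat" where
  "partial_count D s i = card {(a, b, c) \<in> D. c < s \<or> (c = s \<and> a \<le> i)}"

definition dominates :: "nat \<Rightarrow> (nat \<times> nat \<times> nat) set \<Rightarrow> (nat \<times> nat \<times> nat) set \<Rightarrow> bool" where
  "dominates r D E \<longleftrightarrow> (\<forall>s i. 1 \<le> s \<and> s \<le> r \<and> 1 \<le> i \<longrightarrow> partial_count E s i \<le> partial_count D s i)"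

definition shape_down :: "nat list list \<Rightarrow> tableau \<Rightarrow> nat \<Rightarrow> (nat \<times> nat \<times> nat) set" where
  "shape_down lam t k = {x \<in> diagram lam. t x \<le> k}"

definition tab_dominates :: "nat list list \<Rightarrow> nat \<Rightarrow> tableau \<Rightarrow> tableau \<Rightarrow> bool" where
  "tab_dominates lam n s t \<longleftrightarrow>
     (\<forall>k \<in> {1..n}. dominates (length lam) (shape_down lam s k) (shape_down lam t k))"

definition tab_strictly_dominates :: "nat list list \<Rightarrow> nat \<Rightarrow> tableau \<Rightarrow> tableau \<Rightarrow> bool" where
  "tab_strictly_dominates lam n s t \<longleftrightarrow> tab_dominates lam n s t \<and> s \<noteq> t"

definition qint :: "nat \<Rightarrow> ratfun" where
  "qint k = (\<Sum>a<k. qv ^ a)"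

definition qfact :: "nat \<Rightarrow> ratfun" where
  "qfact k = (\<Prod>a\<in>{1..k}. qint a)"

definition qfact_mp :: "nat list list \<Rightarrow> ratfun" where
  "qfact_mp lam = (\<Prod>s\<in>{1..length lam}. \<Prod>i\<in>{1..length (lam ! (s-1))}. qfact (rowlen lam s i))"

definition gamma_init :: "nat list list \<Rightarrow> ratfun" where
  "gamma_init lam = qfact_mp lam *
     (\<Prod>s\<in>{1..length lam}. \<Prod>t\<in>{s<..length lam}.
        \<Prod>(i, j, c)\<in>{x \<in> diagram lam. snd (snd x) = s}. qv powi (int j - int i) * Qv s - Qv t)"

definition is_gamma :: "nat list list \<Rightarrow> nat \<Rightarrow> (tableau \<Rightarrow> ratfun) \<Rightarrow> bool" where
  "is_gamma lam n g \<longleftrightarrow>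
     g (t_row lam) = gamma_init lam \<and>
     (\<forall>s t i. std_tableau lam n s \<and> std_tableau lam n t \<and> 1 \<le> i \<and> i < n \<and>
        s = act_swap t i \<and> tab_strictly_dominates lam n s t \<longrightarrow>
        g t = (qv * res lam s i - res lam t i) * (res lam s i - qv * res lam t i)
               / (res lam s i - res lam t i)\<^sup>2 * g s)"

definition gamma_formula :: "nat list list \<Rightarrow> nat \<Rightarrow> ratfun" where
  "gamma_formula lam n = qv ^ coxeter_length n (w_lam lam) *
    (\<Prod>(i, j, s)\<in>diagram lam.
       qint (hook lam s i j) / qint (leg lam s i j) *
       (\<Prod>t\<in>{s<..length lam}.
          (qv powi (int j - int i) * Qv s - qv ^ rowlen lam t 1 * Qv t) *
          (\<Prod>k\<in>{1..rowlen lam t 1}.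
             (qv powi (int j - int i) * Qv s - qv powi (int k - 1 - int (collen lam t k)) * Qv t) /
             (qv powi (int j - int i) * Qv s - qv powi (int k - int (collen lam t k)) * Qv t))))"

end

theory Submission
  imports Defs
begin

(*
  Call (y, x) an inversion of a standard tableau t if y precedes x in t^lambda but t y > t x.
  Some inversion is adjacent (t y = t x + 1), and exchanging its two entries gives a standard
  tableau that strictly dominates t and has one inversion less.  Running the recursion
  backwards to t^lambda therefore writes gamma_t as gamma_(t^lambda) times the factors
  (q c_y - c_x)(c_y - q c_x)/(c_y - c_x)^2 of the inversions (y, x) of t, c being the residue.
  Each factor is q times a ratio, and t_lambda has l(w_lambda) inversions: the pairs with y in
  an earlier component than x, and the pairs in one component with y strictly north-east of x.
  For a node with arm a, the ratios of the second kind with that node as their corner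
  telescope, together with the factor [a + 1]_q of [lambda]_q!, to [hook]_q/[leg]_q.  Against
  a later component, the ratios of the first kind telescope down each column and then along
  the columns to the product in the statement.
*)

section \<open>Telescoping products\<close>

lemma prod_second_ratio_telescope:
  fixes f :: "nat \<Rightarrow> 'a::field"
  assumes "\<And>i. i \<le> Suc n \<Longrightarrow> f i \<noteq> 0"
  shows "(\<Prod>i<n. f i * f (i + 2) / f (i + 1) ^ 2) = f 0 * f (Suc n) / (f 1 * f n)"
  using assms by (induction n) (auto simp: field_simps power2_eq_square)

lemma prod_prod_second_ratio_telescope:
  fixes f :: "nat \<Rightarrow> 'a::field"
  assumes nz: "\<And>k. 0 < k \<Longrightarrow> f k \<noteq> 0"
  shows "(\<Prod>u\<in>{1..A}. \<Prod>v\<in>{1..L}. f (u + v - 1) * f (u + v + 1) / f (u + v) ^ 2)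
    = f 1 * f (A + L + 1) / (f (A + 1) * f (L + 1))"
proof -
  have inner: "(\<Prod>v\<in>{1..L}. f (u + v - 1) * f (u + v + 1) / f (u + v) ^ 2)
      = f u / f (u + 1) * (f (u + L + 1) / f (u + L))" if "1 \<le> u" for u
  proof -
    have "(\<Prod>v\<in>{1..L}. f (u + v - 1) * f (u + v + 1) / f (u + v) ^ 2)
        = (\<Prod>i<L. f (u + i) * f (u + (i + 2)) / f (u + (i + 1)) ^ 2)"
      by (simp add: prod.atLeast1_atMost_eq ac_simps)
    also have "\<dots> = f (u + 0) * f (u + Suc L) / (f (u + 1) * f (u + L))"
      by (rule prod_second_ratio_telescope[where f = "\<lambda>i. f (u + i)"]) (use nz that in auto)
    finally show ?thesis by simp
  qed
  have "(\<Prod>u\<in>{1..A}. \<Prod>v\<in>{1..L}. f (u + v - 1) * f (u + v + 1) / f (u + v) ^ 2)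
      = (\<Prod>u\<in>{1..A}. f u / f (u + 1) * (f (u + L + 1) / f (u + L)))"
    by (rule prod.cong[OF refl], rule inner) simp
  also have "\<dots> = (\<Prod>k<A. f (k + 1) / f (Suc k + 1)) * (\<Prod>k<A. f (Suc k + L + 1) / f (k + L + 1))"
    unfolding prod.distrib One_nat_def prod.atLeast1_atMost_eq by (simp add: ac_simps)
  also have "\<dots> = f (0 + 1) / f (A + 1) * (f (A + L + 1) / f (0 + L + 1))"
    using prod_lessThan_telescope'[of A "\<lambda>k. f (k + 1)"] prod_lessThan_telescope[of A "\<lambda>k. f (k + L + 1)"]
    by (simp add: nz)
  finally show ?thesis by simp
qed

lemma prod_int_second_ratio_telescope:
  fixes K :: "int \<Rightarrow> 'a::field"
  assumes "\<And>m. K m \<noteq> 0"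
  shows "(\<Prod>c\<in>{1..L}. K (d - int c - 1) * K (d - int c + 1) / K (d - int c) ^ 2)
     = K (d - int L - 1) * K d / (K (d - int L) * K (d - 1))"
proof (induction L)
  case (Suc L)
  have "(\<Prod>c\<in>{1..Suc L}. K (d - int c - 1) * K (d - int c + 1) / K (d - int c) ^ 2)
     = K (d - int L - 1 - 1) * K (d - int L - 1 + 1) / K (d - int L - 1) ^ 2
       * (\<Prod>c\<in>{1..L}. K (d - int c - 1) * K (d - int c + 1) / K (d - int c) ^ 2)"
    by (simp add: prod.cl_ivl_Suc algebra_simps)
  then show ?case
    using Suc assms[of "d - int L - 1"] assms[of "d - int L"] assms[of d] assms[of "d - 1"]
    by (simp add: field_simps power2_eq_square)
qed (use assms in simp)

lemma prod_columns_second_ratio_telescope: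
  fixes K :: "int \<Rightarrow> 'a::field"
  assumes nz: "\<And>m. K m \<noteq> 0"
  shows "K 0 * (\<Prod>d\<in>{1..M}. \<Prod>c\<in>{1..L d}. K (int d - int c - 1) * K (int d - int c + 1) / K (int d - int c) ^ 2)
    = K (int M) * (\<Prod>d\<in>{1..M}. K (int d - int (L d) - 1) / K (int d - int (L d)))"
proof -
  have "(\<Prod>d\<in>{1..M}. \<Prod>c\<in>{1..L d}. K (int d - int c - 1) * K (int d - int c + 1) / K (int d - int c) ^ 2)
      = (\<Prod>d\<in>{1..M}. K (int d - int (L d) - 1) / K (int d - int (L d)) * (K (int d) / K (int d - 1)))"
    by (rule prod.cong[OF refl], subst prod_int_second_ratio_telescope[OF nz]) (simp add: times_divide_times_eq)
  also have "\<dots> = (\<Prod>d\<in>{1..M}. K (int d - int (L d) - 1) / K (int d - int (L d))) * (K (int M) / K 0)"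
    by (induction M) (use nz in \<open>simp_all add: prod.cl_ivl_Suc field_simps\<close>)
  finally show ?thesis using nz[of 0] by (simp add: field_simps)
qed

section \<open>The indeterminates and the factors of the recursion\<close>

definition monomial_fract :: "(nat \<Rightarrow>\<^sub>0 nat) \<Rightarrow> ratfun" where
  "monomial_fract m = Fract (Poly_Mapping.single m 1) 1"

lemma monomial_fract_eq_iff: "monomial_fract m = monomial_fract m' \<longleftrightarrow> m = m'"
proof -
  have "Poly_Mapping.single m (1::rat) = Poly_Mapping.single m' 1 \<longleftrightarrow> m = m'"
    by (metis lookup_single_eq lookup_single_not_eq zero_neq_one)
  then show ?thesis by (simp add: monomial_fract_def eq_fract)
qed

lemma monomial_fract_neq_0: "monomial_fract m \<noteq> 0"
proof -
  have "Poly_Mapping.single m (1::rat) \<noteq> 0"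
    by (metis lookup_single_eq lookup_zero zero_neq_one)
  then show ?thesis by (simp add: monomial_fract_def Zero_fract_def eq_fract)
qed

lemma monomial_fract_mult: "monomial_fract m * monomial_fract m' = monomial_fract (m + m')"
  by (simp add: monomial_fract_def mult_single)

lemma monomial_fract_0: "monomial_fract 0 = 1"
  by (simp add: monomial_fract_def One_fract_def)

lemma Xvar_power: "Xvar i ^ k = monomial_fract (Poly_Mapping.single i k)"
proof (induction k)
  case (Suc k)
  have "Xvar i = monomial_fract (Poly_Mapping.single i 1)"
    by (simp add: Xvar_def monomial_fract_def)
  then show ?case
    using Suc by (simp add: monomial_fract_mult single_add[symmetric])
qed (simp add: monomial_fract_0)

lemma qv_neq_0: "qv \<noteq> 0"
  using Xvar_power[of 0 1] monomial_fract_neq_0 by (simp add: qv_def)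

lemma Qv_neq_0: "Qv s \<noteq> 0"
  using Xvar_power[of s 1] monomial_fract_neq_0 by (simp add: Qv_def)

lemma qv_power_neq_1:
  assumes "0 < k" shows "qv ^ k \<noteq> 1"
proof -
  have "Poly_Mapping.single 0 k \<noteq> 0"
    using assms by (metis lookup_single_eq lookup_zero neq0_conv)
  then show ?thesis
    by (simp add: qv_def Xvar_power monomial_fract_0[symmetric] monomial_fract_eq_iff)
qed

lemma qv_power_mult_Qv_neq:
  assumes "s \<noteq> t" "1 \<le> s"
  shows "qv ^ a * Qv s \<noteq> qv ^ b * Qv t"
proof
  assume "qv ^ a * Qv s = qv ^ b * Qv t"
  then have "monomial_fract (Poly_Mapping.single 0 a + Poly_Mapping.single s 1)
      = monomial_fract (Poly_Mapping.single 0 b + Poly_Mapping.single t 1)"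
    using Xvar_power[of s 1] Xvar_power[of t 1] by (simp add: qv_def Qv_def Xvar_power monomial_fract_mult)
  then have "Poly_Mapping.lookup (Poly_Mapping.single 0 a + Poly_Mapping.single s 1) s
      = Poly_Mapping.lookup (Poly_Mapping.single 0 b + Poly_Mapping.single t (1::nat)) s"
    unfolding monomial_fract_eq_iff by simp
  then show False using assms by (simp add: lookup_add lookup_single when_def)
qed

lemma qv_powi_mult_Qv_neq:
  assumes "s \<noteq> t" "1 \<le> s"
  shows "qv powi a * Qv s \<noteq> qv powi b * Qv t"
proof
  assume eq: "qv powi a * Qv s = qv powi b * Qv t"
  define N where "N = \<bar>a\<bar> + \<bar>b\<bar>"
  have "qv powi (N + a) * Qv s = qv powi (N + b) * Qv t"
    using eq qv_neq_0 by (simp add: power_int_add mult.assoc)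
  moreover have "qv powi (N + a) = qv ^ nat (N + a)" "qv powi (N + b) = qv ^ nat (N + b)"
    unfolding N_def by (simp_all add: power_int_def)
  ultimately show False using qv_power_mult_Qv_neq[OF assms] by metis
qed

definition node_residue :: "nat \<times> nat \<times> nat \<Rightarrow> ratfun" where
  "node_residue = (\<lambda>(i, j, c). qv powi (int j - int i) * Qv c)"

lemma node_residue_eq: "node_residue (i, j, c) = qv powi (int j - int i) * Qv c"
  by (simp add: node_residue_def)

lemma node_residue_neq_0: "node_residue x \<noteq> 0"
  using qv_neq_0 Qv_neq_0 by (cases x) (simp add: node_residue_def)

definition swap_factor :: "ratfun \<Rightarrow> ratfun \<Rightarrow> ratfun" where
  "swap_factor a b = (qv * a - b) * (a - qv * b) / (a - b)\<^sup>2"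

(* Taking one q out of every factor of the recursion produces the power q^l(w_lambda). *)
definition swap_ratio :: "ratfun \<Rightarrow> ratfun \<Rightarrow> ratfun" where
  "swap_ratio a b = (qv * a - b) * (a - qv * b) / (qv * (a - b)\<^sup>2)"

lemma swap_factor_eq_qv_mult_swap_ratio: "swap_factor a b = qv * swap_ratio a b"
  using qv_neq_0 by (simp add: swap_factor_def swap_ratio_def)

lemma swap_ratio_power_mult:
  assumes "1 \<le> e" "b \<noteq> 0"
  shows "swap_ratio (qv ^ e * b) b = (qv ^ (e - 1) - 1) * (qv ^ (e + 1) - 1) / (qv ^ e - 1)\<^sup>2"
proof -
  obtain f where e: "e = Suc f" using assms(1) by (cases e) auto
  have "(qv * (qv ^ e * b) - b) * (qv ^ e * b - qv * b)
      = (b * b * qv) * ((qv ^ (e - 1) - 1) * (qv ^ (e + 1) - 1))"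
    by (simp add: e algebra_simps)
  moreover have "qv * (qv ^ e * b - b)\<^sup>2 = (b * b * qv) * (qv ^ e - 1)\<^sup>2"
    by (simp add: algebra_simps power2_eq_square)
  ultimately show ?thesis
    using assms(2) qv_neq_0 unfolding swap_ratio_def by (metis mult_divide_mult_cancel_left_if mult_eq_0_iff)
qed

lemma swap_ratio_powi:
  "swap_ratio a (qv powi m * Q)
    = (a - qv powi (m - 1) * Q) * (a - qv powi (m + 1) * Q) / (a - qv powi m * Q)\<^sup>2"
proof -
  have m: "qv powi m = qv powi (m - 1) * qv"
    using power_int_add[of qv "m - 1" 1] qv_neq_0 by simp
  have m1: "qv powi (m + 1) = qv powi (m - 1) * qv * qv"
    using power_int_add[of qv m 1] qv_neq_0 m by simp
  have "(qv * a - qv powi m * Q) * (a - qv * (qv powi m * Q))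
      = qv * ((a - qv powi (m - 1) * Q) * (a - qv powi (m + 1) * Q))"
    unfolding m m1 by (simp add: algebra_simps)
  then show ?thesis
    using qv_neq_0 unfolding swap_ratio_def by simp
qed

lemma swap_ratio_hook_pair:
  assumes "1 \<le> u"
  shows "swap_ratio (node_residue (i, j + u, s)) (node_residue (i + v, j, s))
    = (qv ^ (u + v - 1) - 1) * (qv ^ (u + v + 1) - 1) / (qv ^ (u + v) - 1)\<^sup>2"
proof -
  have "qv powi (int (j + u) - int i) = qv powi (int (u + v) + (int j - int (i + v)))"
    by (rule arg_cong[where f = "power_int qv"]) simp
  also have "\<dots> = qv powi int (u + v) * qv powi (int j - int (i + v))"
    by (rule power_int_add) (simp add: qv_neq_0)
  also have "\<dots> = qv ^ (u + v) * qv powi (int j - int (i + v))"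
    by (simp only: power_int_of_nat)
  finally have shift: "qv powi (int (j + u) - int i) = qv ^ (u + v) * qv powi (int j - int (i + v))" .
  have "node_residue (i, j + u, s) = qv ^ (u + v) * node_residue (i + v, j, s)"
    unfolding node_residue_def prod.case shift by (simp only: mult.assoc)
  then show ?thesis
    using assms by (simp add: swap_ratio_power_mult node_residue_neq_0)
qed

lemma qint_eq_div: "qint k = (qv ^ k - 1) / (qv - 1)"
proof -
  have "qint k * (qv - 1) = qv ^ k - 1"
    unfolding qint_def by (induction k) (simp_all add: algebra_simps)
  moreover have "qv - 1 \<noteq> 0" using qv_power_neq_1[of 1] by simp
  ultimately show ?thesis by (simp add: field_simps)
qed

lemma qint_hook_identity:
  "qint (A + 1) * (\<Prod>u\<in>{1..A}. \<Prod>v\<in>{1..L}.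
       (qv ^ (u + v - 1) - 1) * (qv ^ (u + v + 1) - 1) / (qv ^ (u + v) - 1)\<^sup>2)
    = qint (A + L + 1) / qint (L + 1)"
proof -
  define P where "P k = qv ^ k - 1" for k
  have nz: "P k \<noteq> 0" if "0 < k" for k using qv_power_neq_1[OF that] by (simp add: P_def)
  have telescope: "(\<Prod>u\<in>{1..A}. \<Prod>v\<in>{1..L}. P (u + v - 1) * P (u + v + 1) / (P (u + v))\<^sup>2)
    = P 1 * P (A + L + 1) / (P (A + 1) * P (L + 1))"
    by (rule prod_prod_second_ratio_telescope) (rule nz)
  have qint_P: "qint k = P k / P 1" for k
    unfolding qint_eq_div P_def by simp
  show ?thesis
    unfolding P_def[symmetric] qint_P telescope
    using nz[of 1] nz[of "A + 1"] nz[of "L + 1"] by (simp add: field_simps)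
qed

lemma qfact_eq_prod_reversed: "qfact m = (\<Prod>j\<in>{1..m}. qint (m - j + 1))"
  unfolding qfact_def
  by (rule prod.reindex_bij_witness[of _ "\<lambda>j. m - j + 1" "\<lambda>j. m - j + 1"]) auto

section \<open>Diagrams of multipartitions\<close>

lemma interval_if_down_closed:
  fixes S :: "nat set"
  assumes "finite S" "\<And>i. i \<in> S \<Longrightarrow> 1 \<le> i"
    and "\<And>i i'. i \<in> S \<Longrightarrow> 1 \<le> i' \<Longrightarrow> i' \<le> i \<Longrightarrow> i' \<in> S"
  shows "S = {1..card S}"
proof (cases "S = {}")
  case False
  have "S = {1..Max S}"
  proof
    show "S \<subseteq> {1..Max S}" using assms(1,2) by auto
    have "Max S \<in> S" using assms(1) False by simp
    then show "{1..Max S} \<subseteq> S" using assms(3) by auto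
  qed
  moreover have "card {1..Max S} = Max S" by simp
  ultimately show ?thesis by simp
qed simp

lemma sum_le_sum_if_zero_outside:
  fixes f :: "'a \<Rightarrow> 'b::canonically_ordered_monoid_add"
  assumes "finite A" "finite B" "\<And>a. a \<in> A - B \<Longrightarrow> f a = 0"
  shows "sum f A \<le> sum f B"
proof -
  have "sum f A \<le> sum f (A \<union> B)" by (rule sum_mono2) (use assms in auto)
  also have "\<dots> = sum f B" by (rule sum.mono_neutral_right) (use assms in auto)
  finally show ?thesis .
qed

lemma rowlen_eq_0: "length (lam ! (s - 1)) < i \<Longrightarrow> rowlen lam s i = 0"
  by (simp add: rowlen_def)

lemma le_length_if_le_rowlen: "1 \<le> j \<Longrightarrow> j \<le> rowlen lam s i \<Longrightarrow> i \<le> length (lam ! (s - 1))"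
  using rowlen_eq_0[of lam s i] by (cases "i \<le> length (lam ! (s - 1))") auto

definition component_diagram :: "nat list list \<Rightarrow> nat \<Rightarrow> (nat \<times> nat \<times> nat) set" where
  "component_diagram lam s = {x \<in> diagram lam. snd (snd x) = s}"

locale multipartition =
  fixes r n :: nat and lam :: "nat list list"
  assumes is_mp: "is_multipartition r n lam"
begin

lemma length_lam: "length lam = r"
  using is_mp by (simp add: is_multipartition_def)

lemma mem_diagram_iff:
  "(i, j, s) \<in> diagram lam \<longleftrightarrow> 1 \<le> s \<and> s \<le> r \<and> 1 \<le> i \<and> 1 \<le> j \<and> j \<le> rowlen lam s i"
  by (simp add: diagram_def length_lam)

lemma rowlen_antimono:
  assumes "1 \<le> i" "i \<le> i'"
  shows "rowlen lam s i' \<le> rowlen lam s i"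
proof (cases "1 \<le> s \<and> s \<le> r \<and> i' \<le> length (lam ! (s - 1)) \<and> i < i'")
  case True
  then have "lam ! (s - 1) \<in> set lam" using length_lam by (intro nth_mem) linarith
  then have sorted: "sorted_wrt (\<ge>) (lam ! (s - 1))"
    using is_mp by (simp add: is_multipartition_def is_partition_def)
  have "lam ! (s - 1) ! (i' - 1) \<le> lam ! (s - 1) ! (i - 1)"
    by (rule sorted_wrt_nth_less[OF sorted]) (use True assms in auto)
  then show ?thesis using True assms by (simp add: rowlen_def length_lam)
next
  case False
  then show ?thesis using assms by (auto simp: rowlen_def length_lam)
qed

lemma le_rowlen_iff_le_collen:
  assumes "1 \<le> j" "1 \<le> i"
  shows "j \<le> rowlen lam s i \<longleftrightarrow> i \<le> collen lam s j"
proof -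
  define S where "S = {i. 1 \<le> i \<and> j \<le> rowlen lam s i}"
  have "S \<subseteq> {1..length (lam ! (s - 1))}"
    using le_length_if_le_rowlen[OF assms(1)] by (auto simp: S_def)
  then have "S = {1..card S}"
  proof (intro interval_if_down_closed)
    show "k' \<in> S" if "k \<in> S" "1 \<le> k'" "k' \<le> k" for k k'
      using that rowlen_antimono[of k' k s] by (simp add: S_def)
  qed (auto simp: S_def intro: finite_subset)
  then have "S = {1..collen lam s j}" by (simp add: collen_def S_def)
  then have "i \<in> S \<longleftrightarrow> i \<in> {1..collen lam s j}" by simp
  then show ?thesis using assms by (simp add: S_def)
qed

lemma component_diagram_by_rows:
  assumes "1 \<le> s" "s \<le> r"
  shows "component_diagram lam s
    = (\<lambda>(i, j). (i, j, s)) ` (SIGMA i:{1..length (lam ! (s - 1))}. {1..rowlen lam s i})"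
  using assms le_length_if_le_rowlen[of _ lam s]
  by (auto simp: component_diagram_def mem_diagram_iff image_iff)

lemma component_diagram_by_columns:
  assumes "1 \<le> s" "s \<le> r"
  shows "component_diagram lam s
    = (\<lambda>(j, i). (i, j, s)) ` (SIGMA j:{1..rowlen lam s 1}. {1..collen lam s j})"
proof -
  have "(i, j, s) \<in> diagram lam \<longleftrightarrow> 1 \<le> j \<and> j \<le> rowlen lam s 1 \<and> 1 \<le> i \<and> i \<le> collen lam s j"
    for i j
    using assms le_rowlen_iff_le_collen[of j i s] rowlen_antimono[of 1 i s]
    by (auto simp: mem_diagram_iff)
  then show ?thesis
    by (auto simp: component_diagram_def image_iff)
qed

lemma prod_component_by_rows:
  assumes "1 \<le> s" "s \<le> r"
  shows "(\<Prod>z\<in>component_diagram lam s. f z)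
    = (\<Prod>i\<in>{1..length (lam ! (s - 1))}. \<Prod>j\<in>{1..rowlen lam s i}. f (i, j, s))"
  unfolding component_diagram_by_rows[OF assms]
  by (subst prod.reindex) (auto simp: inj_on_def prod.Sigma split_def)

lemma prod_component_by_columns:
  assumes "1 \<le> s" "s \<le> r"
  shows "(\<Prod>z\<in>component_diagram lam s. f z)
    = (\<Prod>j\<in>{1..rowlen lam s 1}. \<Prod>i\<in>{1..collen lam s j}. f (i, j, s))"
  unfolding component_diagram_by_columns[OF assms]
  by (subst prod.reindex) (auto simp: inj_on_def prod.Sigma split_def)

lemma compsize_eq_sum_rowlen:
  assumes "1 \<le> s" "s \<le> r"
  shows "compsize lam s = (\<Sum>i\<in>{1..length (lam ! (s - 1))}. rowlen lam s i)"
proof -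
  have "(\<Sum>i\<in>{1..length (lam ! (s - 1))}. rowlen lam s i) = (\<Sum>i<length (lam ! (s - 1)). lam ! (s - 1) ! i)"
    using assms by (simp add: sum.atLeast1_atMost_eq rowlen_def length_lam)
  then show ?thesis
    using assms by (simp add: compsize_def sum_list_sum_nth length_lam atLeast0LessThan)
qed

lemma card_component_diagram:
  assumes "1 \<le> s" "s \<le> r"
  shows "card (component_diagram lam s) = compsize lam s"
  unfolding component_diagram_by_rows[OF assms] compsize_eq_sum_rowlen[OF assms]
  by (subst card_image) (auto simp: inj_on_def)

lemma compsize_eq_sum_collen:
  assumes "1 \<le> s" "s \<le> r"
  shows "compsize lam s = (\<Sum>j\<in>{1..rowlen lam s 1}. collen lam s j)"
  unfolding card_component_diagram[OF assms, symmetric] component_diagram_by_columns[OF assms]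
  by (subst card_image) (auto simp: inj_on_def)

lemma diagram_eq_UN_components: "diagram lam = (\<Union>s\<in>{1..r}. component_diagram lam s)"
  by (auto simp: component_diagram_def mem_diagram_iff)

lemma finite_component_diagram: "finite (component_diagram lam s)"
proof (cases "1 \<le> s \<and> s \<le> r")
  case False
  then have "component_diagram lam s = {}" by (auto simp: component_diagram_def mem_diagram_iff)
  then show ?thesis by simp
qed (simp add: component_diagram_by_rows)

lemma finite_diagram: "finite (diagram lam)"
  unfolding diagram_eq_UN_components using finite_component_diagram by blast

lemma prod_diagram_by_components:
  "(\<Prod>z\<in>diagram lam. f z) = (\<Prod>s\<in>{1..r}. \<Prod>z\<in>component_diagram lam s. f z)"
  unfolding diagram_eq_UN_components
  by (rule prod.UNION_disjoint) (use finite_component_diagram in \<open>auto simp: component_diagram_def\<close>)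

lemma sum_compsize: "(\<Sum>s\<in>{1..r}. compsize lam s) = n"
proof -
  have "n = (\<Sum>i<r. sum_list (lam ! i))"
    using is_mp length_lam by (simp add: is_multipartition_def sum_list_sum_nth atLeast0LessThan)
  also have "\<dots> = (\<Sum>s\<in>{1..r}. compsize lam s)"
    by (simp add: sum.atLeast1_atMost_eq compsize_def length_lam)
  finally show ?thesis by simp
qed

lemma card_diagram: "card (diagram lam) = n"
proof -
  have "card (diagram lam) = (\<Sum>s\<in>{1..r}. card (component_diagram lam s))"
    unfolding diagram_eq_UN_components
    by (rule card_UN_disjoint) (use finite_component_diagram in \<open>auto simp: component_diagram_def\<close>)
  also have "\<dots> = (\<Sum>s\<in>{1..r}. compsize lam s)"
    by (rule sum.cong) (simp_all add: card_component_diagram)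
  also have "\<dots> = n" by (rule sum_compsize)
  finally show ?thesis .
qed

end

section \<open>The row reading and column reading tableaux\<close>

lemma less_iff_if_strict_mono_wrt_total:
  fixes f :: "'a \<Rightarrow> 'b::linorder"
  assumes mono: "\<And>x y. x \<in> A \<Longrightarrow> y \<in> A \<Longrightarrow> R x y \<Longrightarrow> f x < f y"
    and total: "\<And>x y. x \<noteq> y \<Longrightarrow> R x y \<or> R y x"
    and "x \<in> A" "y \<in> A"
  shows "f x < f y \<longleftrightarrow> R x y"
proof
  assume "f x < f y"
  then have "x \<noteq> y" "\<not> f y < f x" by auto
  then show "R x y" using total[of x y] mono[of y x] assms(3,4) by blast
qed (use mono assms(3,4) in blast)

lemma inj_on_if_strict_mono_wrt_total:
  fixes f :: "'a \<Rightarrow> 'b::linorder"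
  assumes mono: "\<And>x y. x \<in> A \<Longrightarrow> y \<in> A \<Longrightarrow> R x y \<Longrightarrow> f x < f y"
    and total: "\<And>x y. x \<noteq> y \<Longrightarrow> R x y \<or> R y x"
  shows "inj_on f A"
  by (rule inj_onI) (use mono total in \<open>metis less_irrefl\<close>)

fun row_reading_less :: "nat \<times> nat \<times> nat \<Rightarrow> nat \<times> nat \<times> nat \<Rightarrow> bool" where
  "row_reading_less (a, b, s) (c, d, t) \<longleftrightarrow> s < t \<or> (s = t \<and> a < c) \<or> (s = t \<and> a = c \<and> b < d)"

fun column_reading_less :: "nat \<times> nat \<times> nat \<Rightarrow> nat \<times> nat \<times> nat \<Rightarrow> bool" where
  "column_reading_less (a, b, s) (c, d, t) \<longleftrightarrow> t < s \<or> (s = t \<and> b < d) \<or> (s = t \<and> b = d \<and> a < c)"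

lemma row_reading_less_total: "y \<noteq> x \<Longrightarrow> row_reading_less y x \<or> row_reading_less x y"
  by (cases y; cases x) auto

lemma column_reading_less_total: "y \<noteq> x \<Longrightarrow> column_reading_less y x \<or> column_reading_less x y"
  by (cases y; cases x) auto

lemma std_tableauI:
  assumes "card (diagram lam) = n"
    and "\<And>x. x \<notin> diagram lam \<Longrightarrow> t x = 0"
    and "\<And>x. x \<in> diagram lam \<Longrightarrow> t x \<in> {1..n}"
    and "inj_on t (diagram lam)"
    and "\<And>i j s. (i, j, s) \<in> diagram lam \<Longrightarrow> (i, Suc j, s) \<in> diagram lam \<Longrightarrow> t (i, j, s) < t (i, Suc j, s)"
    and "\<And>i j s. (i, j, s) \<in> diagram lam \<Longrightarrow> (Suc i, j, s) \<in> diagram lam \<Longrightarrow> t (i, j, s) < t (Suc i, j, s)"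
  shows "std_tableau lam n t"
proof -
  have "t ` diagram lam = {1..n}"
    using assms(1,3,4) by (intro card_subset_eq) (auto simp: card_image)
  then show ?thesis
    using assms(2,4-6) by (simp add: std_tableau_def bij_betw_def)
qed

context multipartition
begin

definition comps_before :: "nat \<Rightarrow> nat" where
  "comps_before s = (\<Sum>c\<in>{1..<s}. compsize lam c)"

definition rows_above :: "nat \<Rightarrow> nat \<Rightarrow> nat" where
  "rows_above s i = (\<Sum>a\<in>{1..<i}. rowlen lam s a)"

definition comps_after :: "nat \<Rightarrow> nat" where
  "comps_after s = (\<Sum>c\<in>{s<..r}. compsize lam c)"

definition cols_left :: "nat \<Rightarrow> nat \<Rightarrow> nat" where
  "cols_left s j = (\<Sum>b\<in>{1..<j}. collen lam s b)"

lemma t_row_eq: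
  "x \<in> diagram lam \<Longrightarrow> t_row lam x = (case x of (i, j, s) \<Rightarrow> comps_before s + rows_above s i + j)"
  by (cases x) (simp add: t_row_def comps_before_def rows_above_def)

lemma t_col_eq:
  "x \<in> diagram lam \<Longrightarrow> t_col lam x = (case x of (i, j, s) \<Rightarrow> comps_after s + cols_left s j + i)"
  by (cases x) (simp add: t_col_def comps_after_def cols_left_def length_lam)

lemma row_position_bounds:
  assumes "(i, j, s) \<in> diagram lam"
  shows "rows_above s i + j \<le> rows_above s (Suc i)" "rows_above s (Suc i) \<le> compsize lam s"
proof -
  have s: "1 \<le> s" "s \<le> r" and "1 \<le> i" "j \<le> rowlen lam s i"
    using assms by (auto simp: mem_diagram_iff)
  then show "rows_above s i + j \<le> rows_above s (Suc i)"
    by (simp add: rows_above_def)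
  show "rows_above s (Suc i) \<le> compsize lam s"
    unfolding rows_above_def compsize_eq_sum_rowlen[OF s]
    by (rule sum_le_sum_if_zero_outside) (auto simp: rowlen_eq_0)
qed

lemma column_position_bounds:
  assumes "(i, j, s) \<in> diagram lam"
  shows "cols_left s j + i \<le> cols_left s (Suc j)" "cols_left s (Suc j) \<le> compsize lam s"
proof -
  have s: "1 \<le> s" "s \<le> r" and "1 \<le> i" "1 \<le> j" "j \<le> rowlen lam s i"
    using assms by (auto simp: mem_diagram_iff)
  then have "i \<le> collen lam s j" "j \<le> rowlen lam s 1"
    using le_rowlen_iff_le_collen rowlen_antimono[of 1 i s] by auto
  then show "cols_left s j + i \<le> cols_left s (Suc j)"
    using \<open>1 \<le> j\<close> by (simp add: cols_left_def)
  show "cols_left s (Suc j) \<le> compsize lam s"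
    unfolding cols_left_def compsize_eq_sum_collen[OF s]
    using \<open>j \<le> rowlen lam s 1\<close> by (intro sum_mono2) auto
qed

lemma t_row_strict_mono:
  assumes "y \<in> diagram lam" "x \<in> diagram lam" "row_reading_less y x"
  shows "t_row lam y < t_row lam x"
proof -
  obtain a b s where y: "y = (a, b, s)" by (cases y)
  obtain c d t where x: "x = (c, d, t)" by (cases x)
  note bounds = row_position_bounds[OF assms(1)[unfolded y]]
  have "1 \<le> d" using assms(2) x by (simp add: mem_diagram_iff)
  consider "s < t" | "s = t" "a < c" | "s = t" "a = c" "b < d" using assms(3) x y by auto
  then show ?thesis
  proof cases
    case 1
    have "1 \<le> s" using assms(1) y by (simp add: mem_diagram_iff)
    then have "comps_before s + compsize lam s = (\<Sum>c\<in>{1..<Suc s}. compsize lam c)"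
      by (simp add: comps_before_def)
    also have "\<dots> \<le> comps_before t"
      unfolding comps_before_def using 1 by (intro sum_mono2) auto
    finally have "comps_before s + compsize lam s \<le> comps_before t" .
    then show ?thesis
      using bounds \<open>1 \<le> d\<close> assms x y by (simp add: t_row_eq)
  next
    case 2
    have "rows_above s (Suc a) \<le> rows_above s c"
      unfolding rows_above_def using 2 by (intro sum_mono2) auto
    then show ?thesis
      using bounds \<open>1 \<le> d\<close> 2 assms x y by (simp add: t_row_eq)
  qed (use assms x y in \<open>simp add: t_row_eq\<close>)
qed

lemma t_col_strict_mono:
  assumes "y \<in> diagram lam" "x \<in> diagram lam" "column_reading_less y x"
  shows "t_col lam y < t_col lam x"
proof -
  obtain a b s where y: "y = (a, b, s)" by (cases y)
  obtain c d t where x: "x = (c, d, t)" by (cases x)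
  note bounds = column_position_bounds[OF assms(1)[unfolded y]]
  have "1 \<le> c" using assms(2) x by (simp add: mem_diagram_iff)
  consider "t < s" | "s = t" "b < d" | "s = t" "b = d" "a < c" using assms(3) x y by auto
  then show ?thesis
  proof cases
    case 1
    have "comps_after s + compsize lam s = (\<Sum>c\<in>insert s {s<..r}. compsize lam c)"
      by (simp add: comps_after_def)
    also have "\<dots> \<le> comps_after t"
      unfolding comps_after_def using 1 assms(1) y by (intro sum_mono2) (auto simp: mem_diagram_iff)
    finally have "comps_after s + compsize lam s \<le> comps_after t" .
    then show ?thesis
      using bounds \<open>1 \<le> c\<close> assms x y by (simp add: t_col_eq)
  next
    case 2
    have "cols_left s (Suc b) \<le> cols_left s d"
      unfolding cols_left_def using 2 by (intro sum_mono2) auto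
    then show ?thesis
      using bounds \<open>1 \<le> c\<close> 2 assms x y by (simp add: t_col_eq)
  qed (use assms x y in \<open>simp add: t_col_eq\<close>)
qed

lemma t_row_less_iff:
  "y \<in> diagram lam \<Longrightarrow> x \<in> diagram lam \<Longrightarrow> t_row lam y < t_row lam x \<longleftrightarrow> row_reading_less y x"
  by (rule less_iff_if_strict_mono_wrt_total[OF t_row_strict_mono row_reading_less_total])

lemma t_col_less_iff:
  "y \<in> diagram lam \<Longrightarrow> x \<in> diagram lam \<Longrightarrow> t_col lam y < t_col lam x \<longleftrightarrow> column_reading_less y x"
  by (rule less_iff_if_strict_mono_wrt_total[OF t_col_strict_mono column_reading_less_total])

lemma inj_on_t_row: "inj_on (t_row lam) (diagram lam)"
  by (rule inj_on_if_strict_mono_wrt_total[OF t_row_strict_mono row_reading_less_total])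

lemma inj_on_t_col: "inj_on (t_col lam) (diagram lam)"
  by (rule inj_on_if_strict_mono_wrt_total[OF t_col_strict_mono column_reading_less_total])

lemma t_row_in_range:
  assumes "x \<in> diagram lam"
  shows "t_row lam x \<in> {1..n}"
proof -
  obtain i j s where x: "x = (i, j, s)" by (cases x)
  then have s: "1 \<le> s" "s \<le> r" "1 \<le> j" using assms by (auto simp: mem_diagram_iff)
  have "comps_before s + compsize lam s = (\<Sum>c\<in>{1..<Suc s}. compsize lam c)"
    using s by (simp add: comps_before_def)
  also have "\<dots> \<le> (\<Sum>c\<in>{1..r}. compsize lam c)" using s by (intro sum_mono2) auto
  finally have "comps_before s + compsize lam s \<le> n" using sum_compsize by simp
  then show ?thesis
    using row_position_bounds[OF assms[unfolded x]] assms s x by (simp add: t_row_eq)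
qed

lemma t_col_in_range:
  assumes "x \<in> diagram lam"
  shows "t_col lam x \<in> {1..n}"
proof -
  obtain i j s where x: "x = (i, j, s)" by (cases x)
  then have s: "1 \<le> s" "s \<le> r" "1 \<le> i" using assms by (auto simp: mem_diagram_iff)
  have "comps_after s + compsize lam s = (\<Sum>c\<in>insert s {s<..r}. compsize lam c)"
    by (simp add: comps_after_def)
  also have "\<dots> \<le> (\<Sum>c\<in>{1..r}. compsize lam c)" using s by (intro sum_mono2) auto
  finally have "comps_after s + compsize lam s \<le> n" using sum_compsize by simp
  then show ?thesis
    using column_position_bounds[OF assms[unfolded x]] assms s x by (simp add: t_col_eq)
qed

lemma std_t_row: "std_tableau lam n (t_row lam)"
proof (rule std_tableauI[OF card_diagram _ t_row_in_range inj_on_t_row])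
  show "t_row lam x = 0" if "x \<notin> diagram lam" for x
    using that by (cases x) (simp add: t_row_def)
qed (auto intro!: t_row_strict_mono)

lemma std_t_col: "std_tableau lam n (t_col lam)"
proof (rule std_tableauI[OF card_diagram _ t_col_in_range inj_on_t_col])
  show "t_col lam x = 0" if "x \<notin> diagram lam" for x
    using that by (cases x) (simp add: t_col_def)
qed (auto intro!: t_col_strict_mono)

end

section \<open>Inversions and the recursion for gamma\<close>

lemma transpose_Suc_less_transpose_Suc:
  fixes i v w :: nat
  assumes "v < w" "\<not> (v = i \<and> w = Suc i)"
  shows "Transposition.transpose i (Suc i) v < Transposition.transpose i (Suc i) w"
  using assms by (auto simp: transpose_def)

lemma transpose_Suc_le_iff:
  fixes i v k :: nat
  assumes "k \<noteq> i"
  shows "Transposition.transpose i (Suc i) v \<le> k \<longleftrightarrow> v \<le> k"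
  using assms by (auto simp: transpose_def)

lemma card_le_value_eq_value:
  assumes "bij_betw f D {1..m}" "x \<in> D"
  shows "card {z \<in> D. f z \<le> f x} = f x"
proof -
  have "f ` {z \<in> D. f z \<le> f x} = {1..f x}"
  proof
    show "f ` {z \<in> D. f z \<le> f x} \<subseteq> {1..f x}"
      using assms(1) by (auto simp: bij_betw_def)
    show "{1..f x} \<subseteq> f ` {z \<in> D. f z \<le> f x}"
    proof
      fix k assume k: "k \<in> {1..f x}"
      moreover have "f x \<le> m" using assms by (auto simp: bij_betw_def)
      ultimately have "k \<in> f ` D" using assms(1) by (auto simp: bij_betw_def)
      then show "k \<in> f ` {z \<in> D. f z \<le> f x}" using k by auto
    qed
  qed
  moreover have "inj_on f {z \<in> D. f z \<le> f x}"
    using assms(1) by (auto simp: bij_betw_def intro: inj_on_subset)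
  ultimately show ?thesis
    by (metis card_atLeastAtMost card_image diff_Suc_1)
qed

lemma bij_eq_if_same_order:
  fixes f g :: "'a \<Rightarrow> nat"
  assumes f: "bij_betw f D {1..m}" and g: "bij_betw g D {1..m}"
    and order: "\<And>y x. y \<in> D \<Longrightarrow> x \<in> D \<Longrightarrow> f y < f x \<Longrightarrow> g y < g x"
    and "x \<in> D"
  shows "f x = g x"
proof -
  have "f z \<le> f x \<longleftrightarrow> g z \<le> g x" if "z \<in> D" for z
  proof (cases "z = x")
    case False
    then have "f z \<noteq> f x" "g z \<noteq> g x"
      using f g that \<open>x \<in> D\<close> by (metis bij_betw_def inj_onD)+
    then show ?thesis using order[OF that \<open>x \<in> D\<close>] order[OF \<open>x \<in> D\<close> that] by linarith
  qed simp
  then have "{z \<in> D. f z \<le> f x} = {z \<in> D. g z \<le> g x}" by blast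
  then show ?thesis
    using card_le_value_eq_value[OF f \<open>x \<in> D\<close>] card_le_value_eq_value[OF g \<open>x \<in> D\<close>] by simp
qed

lemma partial_count_le_replace_by_earlier:
  assumes "finite E" "x \<in> E" "y \<notin> E" "row_reading_less y x"
  shows "partial_count E s i \<le> partial_count (insert y (E - {x})) s i"
proof -
  define P where "P = (\<lambda>(a::nat, b::nat, c). c < s \<or> (c = s \<and> a \<le> i))"
  have P_earlier: "P y" if "P x"
    using that assms(4) by (cases y; cases x) (auto simp: P_def)
  define h where "h z = (if z = x then y else z)" for z
  have "card {z \<in> E. P z} \<le> card {z \<in> insert y (E - {x}). P z}"
  proof (rule card_inj_on_le)
    show "inj_on h {z \<in> E. P z}"
      using assms(3) by (auto simp: h_def inj_on_def)
    show "h ` {z \<in> E. P z} \<subseteq> {z \<in> insert y (E - {x}). P z}"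
      using P_earlier by (auto simp: h_def)
  qed (use assms(1) in simp)
  moreover have "{(a, b, c) \<in> F. c < s \<or> (c = s \<and> a \<le> i)} = {z \<in> F. P z}" for F
    by (auto simp: P_def)
  ultimately show ?thesis unfolding partial_count_def by presburger
qed

definition inversions ::
    "nat list list \<Rightarrow> tableau \<Rightarrow> ((nat \<times> nat \<times> nat) \<times> (nat \<times> nat \<times> nat)) set" where
  "inversions lam t = {(y, x). y \<in> diagram lam \<and> x \<in> diagram lam \<and> t_row lam y < t_row lam x \<and> t x < t y}"

lemma res_eq_node_residue:
  assumes "bij_betw t (diagram lam) {1..n}" "x \<in> diagram lam"
  shows "res lam t (t x) = node_residue x"
  using assms by (simp add: res_def node_residue_def bij_betw_def inv_into_f_f)

context multipartition
begin

lemma finite_inversions: "finite (inversions lam t)"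
  by (rule finite_subset[of _ "diagram lam \<times> diagram lam"]) (auto simp: inversions_def finite_diagram)

lemma eq_t_row_if_no_inversions:
  assumes std: "std_tableau lam n t" and no_inv: "inversions lam t = {}"
  shows "t = t_row lam"
proof
  fix x
  show "t x = t_row lam x"
  proof (cases "x \<in> diagram lam")
    case True
    have "t_row lam x = t x"
    proof (rule bij_eq_if_same_order[OF _ _ _ True])
      show "bij_betw (t_row lam) (diagram lam) {1..n}" "bij_betw t (diagram lam) {1..n}"
        using std std_t_row by (simp_all add: std_tableau_def)
      show "t y < t z" if "y \<in> diagram lam" "z \<in> diagram lam" "t_row lam y < t_row lam z" for y z
      proof -
        have "t y \<noteq> t z"
          using that std inj_on_t_row by (auto simp: std_tableau_def bij_betw_def dest: inj_onD)
        have "(y, z) \<notin> inversions lam t" using no_inv by simp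
        then have "\<not> t z < t y" using that by (simp add: inversions_def)
        with \<open>t y \<noteq> t z\<close> show ?thesis by linarith
      qed
    qed
    then show ?thesis by simp
  next
    case False
    then show ?thesis using std by (cases x) (simp add: std_tableau_def t_row_def)
  qed
qed

lemma adjacent_inversion_exists:
  assumes std: "std_tableau lam n t" and "inversions lam t \<noteq> {}"
  shows "\<exists>y x. (y, x) \<in> inversions lam t \<and> t y = Suc (t x)"
proof -
  have bij: "bij_betw t (diagram lam) {1..n}" using std by (simp add: std_tableau_def)
  let ?gap = "\<lambda>(y, x). t y - t x"
  obtain p where p: "p \<in> inversions lam t" and least: "\<And>p'. p' \<in> inversions lam t \<Longrightarrow> ?gap p \<le> ?gap p'"
    using assms(2) ex_has_least_nat[of "\<lambda>p. p \<in> inversions lam t" _ ?gap] by blast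
  obtain y x where yx: "p = (y, x)" by (cases p)
  have D: "y \<in> diagram lam" "x \<in> diagram lam" and row: "t_row lam y < t_row lam x" and "t x < t y"
    using p yx by (auto simp: inversions_def)
  show ?thesis
  proof (rule ccontr)
    assume no_adjacent: "\<nexists>y x. (y, x) \<in> inversions lam t \<and> t y = Suc (t x)"
    then have "t y \<noteq> Suc (t x)" using p yx by blast
    then have gap: "Suc (t x) < t y" using \<open>t x < t y\<close> by simp
    moreover have "t y \<le> n" using bij D by (auto simp: bij_betw_def)
    ultimately have "Suc (t x) \<in> t ` diagram lam" using bij by (simp add: bij_betw_def)
    then obtain z where z: "z \<in> diagram lam" "t z = Suc (t x)" by (metis imageE)
    then have "z \<noteq> x" by auto
    then have "t_row lam z \<noteq> t_row lam x"
      using D z inj_on_t_row by (auto dest: inj_onD)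
    then consider "t_row lam z < t_row lam x" | "t_row lam x < t_row lam z" by linarith
    then show False
    proof cases
      case 1
      then have "(z, x) \<in> inversions lam t" using z D by (simp add: inversions_def)
      then show False using no_adjacent z(2) by blast
    next
      case 2
      then have "(y, z) \<in> inversions lam t" using z D row gap by (auto simp: inversions_def)
      then show False using least[of "(y, z)"] yx z gap by simp
    qed
  qed
qed

end

locale adjacent_inversion = multipartition +
  fixes t :: tableau and y x :: "nat \<times> nat \<times> nat"
  assumes std: "std_tableau lam n t"
    and inversion: "(y, x) \<in> inversions lam t"
    and adjacent: "t y = Suc (t x)"
begin

definition swapped :: tableau where
  "swapped = act_swap t (t x)"

lemma bij_t: "bij_betw t (diagram lam) {1..n}"
  using std by (simp add: std_tableau_def)

lemma y_in_diagram: "y \<in> diagram lam" and x_in_diagram: "x \<in> diagram lam"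
  and row_less: "t_row lam y < t_row lam x"
  using inversion by (auto simp: inversions_def)

lemma t_x_bounds: "1 \<le> t x" "t x < n"
proof -
  have "t x \<in> {1..n}" "t y \<in> {1..n}"
    using bij_t x_in_diagram y_in_diagram by (auto simp: bij_betw_def)
  then show "1 \<le> t x" "t x < n" using adjacent by auto
qed

lemma eq_x_iff: "z \<in> diagram lam \<Longrightarrow> t z = t x \<longleftrightarrow> z = x"
  and eq_y_iff: "z \<in> diagram lam \<Longrightarrow> t z = Suc (t x) \<longleftrightarrow> z = y"
  unfolding adjacent[symmetric]
  using bij_t x_in_diagram y_in_diagram by (auto simp: bij_betw_def dest: inj_onD)

lemma swapped_apply: "swapped z = Transposition.transpose (t x) (Suc (t x)) (t z)"
  by (simp add: swapped_def act_swap_def)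

lemma swapped_x: "swapped x = Suc (t x)" and swapped_y: "swapped y = t x"
  by (simp_all add: swapped_apply adjacent)

lemma swapped_other: "z \<in> diagram lam \<Longrightarrow> z \<noteq> x \<Longrightarrow> z \<noteq> y \<Longrightarrow> swapped z = t z"
  using eq_x_iff eq_y_iff by (simp add: swapped_apply transpose_def)

lemma swapped_less_swapped:
  assumes "u \<in> diagram lam" "v \<in> diagram lam" "t u < t v" "\<not> (u = x \<and> v = y)"
  shows "swapped u < swapped v"
  using assms eq_x_iff eq_y_iff
  by (simp add: swapped_apply transpose_Suc_less_transpose_Suc)

lemma std_swapped: "std_tableau lam n swapped"
  unfolding std_tableau_def
proof (intro conjI allI impI)
  have "bij_betw (Transposition.transpose (t x) (Suc (t x))) {1..n} {1..n}"
    using t_x_bounds by (intro bij_betw_transpose_iff) auto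
  then show "bij_betw swapped (diagram lam) {1..n}"
    using bij_betw_trans[OF bij_t] by (simp add: swapped_def act_swap_def comp_def)
  show "swapped z = 0" if "z \<notin> diagram lam" for z
  proof -
    have "t z = 0" using that std unfolding std_tableau_def by blast
    then show ?thesis using t_x_bounds by (simp add: swapped_apply transpose_def)
  qed
  show "swapped (i, j, s) < swapped (i, Suc j, s)"
    if "(i, j, s) \<in> diagram lam \<and> (i, Suc j, s) \<in> diagram lam" for i j s
    using that std row_less t_row_strict_mono[of "(i, j, s)" "(i, Suc j, s)"]
    by (intro swapped_less_swapped) (auto simp: std_tableau_def)
  show "swapped (i, j, s) < swapped (Suc i, j, s)"
    if "(i, j, s) \<in> diagram lam \<and> (Suc i, j, s) \<in> diagram lam" for i j s
    using that std row_less t_row_strict_mono[of "(i, j, s)" "(Suc i, j, s)"]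
    by (intro swapped_less_swapped) (auto simp: std_tableau_def)
qed

lemma shape_down_swapped:
  "shape_down lam swapped k
    = (if k = t x then insert y (shape_down lam t k - {x}) else shape_down lam t k)"
proof (cases "k = t x")
  case True
  have "swapped z \<le> t x \<longleftrightarrow> z = y \<or> (z \<noteq> x \<and> t z \<le> t x)" if "z \<in> diagram lam" for z
    using swapped_x swapped_y swapped_other[OF that] adjacent by (cases "z = x"; cases "z = y") auto
  then show ?thesis
    using True y_in_diagram by (auto simp: shape_down_def)
qed (simp add: shape_down_def swapped_apply transpose_Suc_le_iff)

lemma swapped_strictly_dominates: "tab_strictly_dominates lam n swapped t"
  unfolding tab_strictly_dominates_def tab_dominates_def dominates_def
proof (intro conjI ballI allI impI)
  show "swapped \<noteq> t" using swapped_x by (metis n_not_Suc_n)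
  have "row_reading_less y x"
    using row_less t_row_less_iff y_in_diagram x_in_diagram by blast
  then show "partial_count (shape_down lam t k) s i \<le> partial_count (shape_down lam swapped k) s i"
    for k s i
  proof (cases "k = t x")
    case True
    have "finite (shape_down lam t k)" "x \<in> shape_down lam t k" "y \<notin> shape_down lam t k"
      using True x_in_diagram adjacent finite_diagram by (simp_all add: shape_down_def)
    then show ?thesis
      using True \<open>row_reading_less y x\<close> shape_down_swapped
      by (simp add: partial_count_le_replace_by_earlier)
  qed (simp add: shape_down_swapped)
qed

lemma inversions_swapped: "inversions lam swapped = inversions lam t - {(y, x)}"
proof -
  have "swapped v < swapped u \<longleftrightarrow> t v < t u"
    if "u \<in> diagram lam" "v \<in> diagram lam" "t_row lam u < t_row lam v" "(u, v) \<noteq> (y, x)" for u v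
  proof -
    have "\<not> (u = x \<and> v = y)" using that row_less by auto
    moreover have "u \<noteq> v" using that by auto
    then have "t u \<noteq> t v" using that bij_t by (auto simp: bij_betw_def dest: inj_onD)
    ultimately show ?thesis
      using that swapped_less_swapped[of u v] swapped_less_swapped[of v u]
      by (metis linorder_neq_iff not_less_iff_gr_or_eq)
  qed
  note key = this
  show ?thesis
  proof (rule set_eqI)
    fix p :: "(nat \<times> nat \<times> nat) \<times> (nat \<times> nat \<times> nat)"
    obtain u v where p: "p = (u, v)" by (cases p)
    show "p \<in> inversions lam swapped \<longleftrightarrow> p \<in> inversions lam t - {(y, x)}"
    proof (cases "(u, v) = (y, x)")
      case True
      then show ?thesis using p swapped_x swapped_y by (simp add: inversions_def)
    next
      case False
      then show ?thesis using p key[of u v] by (auto simp: inversions_def)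
    qed
  qed
qed

lemma res_swapped: "res lam swapped (t x) = node_residue y"
proof -
  have "bij_betw swapped (diagram lam) {1..n}" using std_swapped by (simp add: std_tableau_def)
  from res_eq_node_residue[OF this y_in_diagram] show ?thesis unfolding swapped_y .
qed

lemma res_t: "res lam t (t x) = node_residue x"
  using res_eq_node_residue[OF bij_t x_in_diagram] .

lemma gamma_swap_step:
  assumes "is_gamma lam n g"
  shows "g t = swap_factor (node_residue y) (node_residue x) * g swapped"
proof -
  have "g t = swap_factor (res lam swapped (t x)) (res lam t (t x)) * g swapped"
    using assms std std_swapped swapped_strictly_dominates t_x_bounds
    unfolding is_gamma_def swap_factor_def swapped_def by blast
  then show ?thesis unfolding res_swapped res_t .
qed

end

context multipartition
begin

lemma gamma_eq_prod_inversions: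
  assumes gamma: "is_gamma lam n g" and "std_tableau lam n t"
  shows "g t = gamma_init lam * (\<Prod>(y, x)\<in>inversions lam t. swap_factor (node_residue y) (node_residue x))"
  using assms(2)
proof (induction "card (inversions lam t)" arbitrary: t rule: less_induct)
  case less
  show ?case
  proof (cases "inversions lam t = {}")
    case True
    then show ?thesis
      using gamma eq_t_row_if_no_inversions[OF less.prems] by (simp add: is_gamma_def)
  next
    case False
    then obtain y x where yx: "(y, x) \<in> inversions lam t" and adj: "t y = Suc (t x)"
      using adjacent_inversion_exists less.prems by blast
    interpret adjacent_inversion r n lam t y x
      using less.prems yx adj by unfold_locales
    have "card (inversions lam swapped) < card (inversions lam t)"
      unfolding inversions_swapped by (rule card_Diff1_less[OF finite_inversions yx])
    then have IH: "g swapped = gamma_init lam *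
        (\<Prod>(y, x)\<in>inversions lam t - {(y, x)}. swap_factor (node_residue y) (node_residue x))"
      using less.hyps std_swapped inversions_swapped by simp
    have "g t = swap_factor (node_residue y) (node_residue x) * g swapped"
      by (rule gamma_swap_step[OF gamma])
    also have "\<dots> = gamma_init lam * (swap_factor (node_residue y) (node_residue x) *
        (\<Prod>(y, x)\<in>inversions lam t - {(y, x)}. swap_factor (node_residue y) (node_residue x)))"
      unfolding IH by (simp add: ac_simps)
    also have "\<dots> = gamma_init lam *
        (\<Prod>(y, x)\<in>inversions lam t. swap_factor (node_residue y) (node_residue x))"
      using prod.remove[OF finite_inversions yx, of "\<lambda>(y, x). swap_factor (node_residue y) (node_residue x)"]
      by simp
    finally show ?thesis .
  qed
qed

end

section \<open>Evaluation at the column reading tableau\<close>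

definition cross_pairs :: "nat list list \<Rightarrow> ((nat \<times> nat \<times> nat) \<times> (nat \<times> nat \<times> nat)) set" where
  "cross_pairs lam = {(y, x). y \<in> diagram lam \<and> x \<in> diagram lam \<and> snd (snd y) < snd (snd x)}"

definition hook_pairs :: "nat list list \<Rightarrow> ((nat \<times> nat \<times> nat) \<times> (nat \<times> nat \<times> nat)) set" where
  "hook_pairs lam = {(y, x). y \<in> diagram lam \<and> x \<in> diagram lam \<and> snd (snd y) = snd (snd x)
      \<and> fst y < fst x \<and> fst (snd x) < fst (snd y)}"

context multipartition
begin

lemma inversions_t_col: "inversions lam (t_col lam) = cross_pairs lam \<union> hook_pairs lam"
proof (rule set_eqI)
  fix p :: "(nat \<times> nat \<times> nat) \<times> (nat \<times> nat \<times> nat)"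
  obtain a b s c d t where p: "p = ((a, b, s), (c, d, t))" by (cases p) auto
  show "p \<in> inversions lam (t_col lam) \<longleftrightarrow> p \<in> cross_pairs lam \<union> hook_pairs lam"
  proof (cases "(a, b, s) \<in> diagram lam \<and> (c, d, t) \<in> diagram lam")
    case True
    then show ?thesis
      using p t_row_less_iff[of "(a, b, s)" "(c, d, t)"] t_col_less_iff[of "(c, d, t)" "(a, b, s)"]
      by (auto simp: inversions_def cross_pairs_def hook_pairs_def)
  qed (use p in \<open>auto simp: inversions_def cross_pairs_def hook_pairs_def\<close>)
qed

lemma t_row_pairs_image_inversions_t_col:
  "(\<lambda>(y, x). (t_row lam y, t_row lam x)) ` inversions lam (t_col lam)
    = {(a, b). 1 \<le> a \<and> a < b \<and> b \<le> n \<and> w_lam lam b < w_lam lam a}"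
    (is "?pos ` _ = ?inv")
proof -
  have w: "w_lam lam (t_row lam z) = t_col lam z" if "z \<in> diagram lam" for z
    using that inj_on_t_row by (simp add: w_lam_def inv_into_f_f)
  show ?thesis
  proof
    show "?pos ` inversions lam (t_col lam) \<subseteq> ?inv"
    proof
      fix q assume "q \<in> ?pos ` inversions lam (t_col lam)"
      then obtain p where "p \<in> inversions lam (t_col lam)" "q = ?pos p" by blast
      moreover obtain y x where "p = (y, x)" by (cases p)
      ultimately have "(y, x) \<in> inversions lam (t_col lam)" "q = ?pos (y, x)" by simp_all
      then have "y \<in> diagram lam" "x \<in> diagram lam" "t_row lam y < t_row lam x"
          "t_col lam x < t_col lam y"
        by (simp_all add: inversions_def)
      then show "q \<in> ?inv"
        using t_row_in_range w \<open>q = ?pos (y, x)\<close> by auto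
    qed
    show "?inv \<subseteq> ?pos ` inversions lam (t_col lam)"
    proof clarify
      fix a b assume ab: "1 \<le> a" "a < b" "b \<le> n" "w_lam lam b < w_lam lam a"
      then have "a \<in> t_row lam ` diagram lam" "b \<in> t_row lam ` diagram lam"
        using std_t_row by (auto simp: std_tableau_def bij_betw_def)
      then obtain y x where yx: "y \<in> diagram lam" "a = t_row lam y" "x \<in> diagram lam" "b = t_row lam x"
        by blast
      then have "(y, x) \<in> inversions lam (t_col lam)"
        using ab w by (simp add: inversions_def)
      then show "(a, b) \<in> ?pos ` inversions lam (t_col lam)"
        by (rule rev_image_eqI) (simp add: yx)
    qed
  qed
qed

lemma coxeter_length_w_lam: "coxeter_length n (w_lam lam) = card (inversions lam (t_col lam))"
proof -
  have "inj_on (\<lambda>(y, x). (t_row lam y, t_row lam x)) (inversions lam (t_col lam))"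
    by (rule inj_on_subset[of _ "diagram lam \<times> diagram lam"])
       (auto simp: inversions_def inj_on_def dest: inj_onD[OF inj_on_t_row])
  then show ?thesis
    unfolding coxeter_length_def t_row_pairs_image_inversions_t_col[symmetric] by (simp add: card_image)
qed

lemma prod_swap_factor_t_col:
  "(\<Prod>(y, x)\<in>inversions lam (t_col lam). swap_factor (node_residue y) (node_residue x))
    = qv ^ coxeter_length n (w_lam lam) *
      ((\<Prod>(y, x)\<in>hook_pairs lam. swap_ratio (node_residue y) (node_residue x)) *
       (\<Prod>(y, x)\<in>cross_pairs lam. swap_ratio (node_residue y) (node_residue x)))"
proof -
  have "finite (cross_pairs lam)" "finite (hook_pairs lam)" "cross_pairs lam \<inter> hook_pairs lam = {}"
    using finite_inversions[of "t_col lam"]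
    by (auto simp: inversions_t_col cross_pairs_def hook_pairs_def)
  then show ?thesis
    unfolding swap_factor_eq_qv_mult_swap_ratio coxeter_length_w_lam
    by (simp add: split_def prod.distrib inversions_t_col prod.union_disjoint)
qed

lemma qfact_mp_eq_prod_diagram:
  "qfact_mp lam = (\<Prod>(i, j, s)\<in>diagram lam. qint (rowlen lam s i - j + 1))"
proof -
  have "qfact_mp lam = (\<Prod>s\<in>{1..r}. \<Prod>i\<in>{1..length (lam ! (s - 1))}. \<Prod>j\<in>{1..rowlen lam s i}.
      qint (rowlen lam s i - j + 1))"
    unfolding qfact_mp_def length_lam qfact_eq_prod_reversed ..
  also have "\<dots> = (\<Prod>s\<in>{1..r}. \<Prod>(i, j, s)\<in>component_diagram lam s. qint (rowlen lam s i - j + 1))"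
    by (rule prod.cong[OF refl]) (simp add: prod_component_by_rows)
  finally show ?thesis by (simp add: prod_diagram_by_components)
qed

lemma gamma_init_eq_prod_diagram:
  "gamma_init lam = qfact_mp lam *
     (\<Prod>(i, j, s)\<in>diagram lam. \<Prod>t\<in>{s<..r}. node_residue (i, j, s) - Qv t)"
proof -
  have "(\<Prod>s\<in>{1..r}. \<Prod>t\<in>{s<..r}. \<Prod>(i, j, c)\<in>component_diagram lam s. qv powi (int j - int i) * Qv s - Qv t)
      = (\<Prod>s\<in>{1..r}. \<Prod>(i, j, c)\<in>component_diagram lam s. \<Prod>t\<in>{c<..r}. node_residue (i, j, c) - Qv t)"
    by (intro prod.cong[OF refl] trans[OF prod.swap])
       (auto simp: component_diagram_def node_residue_def split_def intro!: prod.cong)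
  then show ?thesis
    unfolding gamma_init_def length_lam component_diagram_def[symmetric]
    by (simp add: prod_diagram_by_components)
qed

lemma hook_pairs_eq_image:
  "hook_pairs lam = (\<lambda>((i, j, s), (u, v)). ((i, j + u, s), (i + v, j, s))) `
     Sigma (diagram lam) (\<lambda>(i, j, s). {1..rowlen lam s i - j} \<times> {1..collen lam s j - i})"
    (is "_ = ?shift ` ?params")
proof
  show "hook_pairs lam \<subseteq> ?shift ` ?params"
  proof
    fix p assume p: "p \<in> hook_pairs lam"
    obtain a b s c d t where p_eq: "p = ((a, b, s), (c, d, t))" by (cases p) auto
    from p have h: "(a, b, s) \<in> diagram lam" "(c, d, t) \<in> diagram lam" "s = t" "a < c" "d < b"
      unfolding p_eq by (auto simp: hook_pairs_def)
    then have "c \<le> collen lam s d" "(a, d, s) \<in> diagram lam"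
      using le_rowlen_iff_le_collen[of d c s] by (auto simp: mem_diagram_iff)
    then have "((a, d, s), (b - d, c - a)) \<in> ?params" using h by (auto simp: mem_diagram_iff)
    moreover have "p = ?shift ((a, d, s), (b - d, c - a))" using h p_eq by simp
    ultimately show "p \<in> ?shift ` ?params" by (rule rev_image_eqI)
  qed
  show "?shift ` ?params \<subseteq> hook_pairs lam"
  proof
    fix p assume "p \<in> ?shift ` ?params"
    then obtain a d s u v where p_eq: "p = ?shift ((a, d, s), (u, v))"
      and param: "((a, d, s), (u, v)) \<in> ?params"
      by auto
    from param have h: "1 \<le> s" "s \<le> r" "1 \<le> a" "1 \<le> d" "d + u \<le> rowlen lam s a"
        "a + v \<le> collen lam s d" "1 \<le> u" "1 \<le> v"
      by (auto simp: mem_diagram_iff)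
    then have "d \<le> rowlen lam s (a + v)" using le_rowlen_iff_le_collen[of d "a + v" s] by simp
    then show "p \<in> hook_pairs lam"
      unfolding p_eq using h by (auto simp: hook_pairs_def mem_diagram_iff)
  qed
qed

lemma prod_hook_pairs_by_corners:
  "(\<Prod>(y, x)\<in>hook_pairs lam. swap_ratio (node_residue y) (node_residue x))
    = (\<Prod>(i, j, s)\<in>diagram lam. \<Prod>u\<in>{1..rowlen lam s i - j}. \<Prod>v\<in>{1..collen lam s j - i}.
         (qv ^ (u + v - 1) - 1) * (qv ^ (u + v + 1) - 1) / (qv ^ (u + v) - 1)\<^sup>2)"
proof -
  have "inj_on (\<lambda>((i, j, s), (u, v)). ((i, j + u, s), (i + v, j, s :: nat))) X"
    for X :: "((nat \<times> nat \<times> nat) \<times> nat \<times> nat) set"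
    by (rule inj_onI) (clarsimp split: prod.splits)
  then have "(\<Prod>(y, x)\<in>hook_pairs lam. swap_ratio (node_residue y) (node_residue x))
    = (\<Prod>((i, j, s), (u, v))\<in>Sigma (diagram lam) (\<lambda>(i, j, s). {1..rowlen lam s i - j} \<times> {1..collen lam s j - i}).
         swap_ratio (node_residue (i, j + u, s)) (node_residue (i + v, j, s)))"
    unfolding hook_pairs_eq_image by (subst prod.reindex) (simp_all add: split_def)
  also have "\<dots> = (\<Prod>((i, j, s), (u, v))\<in>Sigma (diagram lam) (\<lambda>(i, j, s). {1..rowlen lam s i - j} \<times> {1..collen lam s j - i}).
         (qv ^ (u + v - 1) - 1) * (qv ^ (u + v + 1) - 1) / (qv ^ (u + v) - 1)\<^sup>2)"
    by (rule prod.cong[OF refl]) (auto simp: swap_ratio_hook_pair)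
  also have "\<dots> = (\<Prod>(i, j, s)\<in>diagram lam. \<Prod>u\<in>{1..rowlen lam s i - j}. \<Prod>v\<in>{1..collen lam s j - i}.
         (qv ^ (u + v - 1) - 1) * (qv ^ (u + v + 1) - 1) / (qv ^ (u + v) - 1)\<^sup>2)"
    by (subst prod.Sigma[symmetric]) (auto simp: finite_diagram split_def prod.cartesian_product)
  finally show ?thesis .
qed

lemma hook_length_product:
  "qfact_mp lam * (\<Prod>(y, x)\<in>hook_pairs lam. swap_ratio (node_residue y) (node_residue x))
    = (\<Prod>(i, j, s)\<in>diagram lam. qint (hook lam s i j) / qint (leg lam s i j))"
  unfolding qfact_mp_eq_prod_diagram prod_hook_pairs_by_corners prod.distrib[symmetric]
proof (rule prod.cong[OF refl], clarify)
  fix i j s assume "(i, j, s) \<in> diagram lam"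
  then have "1 \<le> i" "1 \<le> j" "j \<le> rowlen lam s i" "i \<le> collen lam s j"
    using le_rowlen_iff_le_collen by (auto simp: mem_diagram_iff)
  then have "hook lam s i j = (rowlen lam s i - j) + (collen lam s j - i) + 1"
    "leg lam s i j = (collen lam s j - i) + 1" "rowlen lam s i - j + 1 = (rowlen lam s i - j) + 1"
    by (simp_all add: hook_def leg_def)
  then show "qint (rowlen lam s i - j + 1) * (\<Prod>u\<in>{1..rowlen lam s i - j}. \<Prod>v\<in>{1..collen lam s j - i}.
         (qv ^ (u + v - 1) - 1) * (qv ^ (u + v + 1) - 1) / (qv ^ (u + v) - 1)\<^sup>2)
      = qint (hook lam s i j) / qint (leg lam s i j)"
    by (simp only: qint_hook_identity)
qed

lemma prod_cross_pairs_by_components: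
  "(\<Prod>(y, x)\<in>cross_pairs lam. f y x)
    = (\<Prod>(i, j, s)\<in>diagram lam. \<Prod>t\<in>{s<..r}. \<Prod>x\<in>component_diagram lam t. f (i, j, s) x)"
proof -
  have "cross_pairs lam = Sigma (diagram lam) (\<lambda>y. \<Union>t\<in>{snd (snd y)<..r}. component_diagram lam t)"
    by (auto simp: cross_pairs_def component_diagram_def mem_diagram_iff)
  then have "(\<Prod>(y, x)\<in>cross_pairs lam. f y x)
      = (\<Prod>y\<in>diagram lam. \<Prod>x\<in>(\<Union>t\<in>{snd (snd y)<..r}. component_diagram lam t). f y x)"
    by (simp add: prod.Sigma finite_diagram finite_component_diagram)
  also have "\<dots> = (\<Prod>y\<in>diagram lam. \<Prod>t\<in>{snd (snd y)<..r}. \<Prod>x\<in>component_diagram lam t. f y x)"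
    by (intro prod.cong[OF refl] prod.UNION_disjoint)
       (use finite_component_diagram in \<open>auto simp: component_diagram_def\<close>)
  finally show ?thesis by (simp add: split_def)
qed

lemma cross_component_product:
  assumes "(i, j, s) \<in> diagram lam" "s < t" "t \<le> r"
  defines "a \<equiv> qv powi (int j - int i) * Qv s"
  shows "(a - Qv t) * (\<Prod>x\<in>component_diagram lam t. swap_ratio a (node_residue x))
    = (a - qv ^ rowlen lam t 1 * Qv t) *
      (\<Prod>k\<in>{1..rowlen lam t 1}.
         (a - qv powi (int k - 1 - int (collen lam t k)) * Qv t) /
         (a - qv powi (int k - int (collen lam t k)) * Qv t))"
proof -
  define K where "K m = a - qv powi m * Qv t" for m
  have nz: "K m \<noteq> 0" for m
    using assms(1,2) qv_powi_mult_Qv_neq[of s t] by (simp add: K_def a_def mem_diagram_iff)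
  have "(\<Prod>x\<in>component_diagram lam t. swap_ratio a (node_residue x))
      = (\<Prod>d\<in>{1..rowlen lam t 1}. \<Prod>c\<in>{1..collen lam t d}. swap_ratio a (qv powi (int d - int c) * Qv t))"
    using assms(2,3) by (simp add: prod_component_by_columns node_residue_def)
  also have "\<dots> = (\<Prod>d\<in>{1..rowlen lam t 1}. \<Prod>c\<in>{1..collen lam t d}.
      K (int d - int c - 1) * K (int d - int c + 1) / K (int d - int c) ^ 2)"
    by (simp add: swap_ratio_powi K_def)
  finally have columns: "(\<Prod>x\<in>component_diagram lam t. swap_ratio a (node_residue x))
      = (\<Prod>d\<in>{1..rowlen lam t 1}. \<Prod>c\<in>{1..collen lam t d}.
           K (int d - int c - 1) * K (int d - int c + 1) / K (int d - int c) ^ 2)" .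
  have "(a - Qv t) * (\<Prod>x\<in>component_diagram lam t. swap_ratio a (node_residue x))
      = K 0 * (\<Prod>d\<in>{1..rowlen lam t 1}. \<Prod>c\<in>{1..collen lam t d}.
           K (int d - int c - 1) * K (int d - int c + 1) / K (int d - int c) ^ 2)"
    unfolding columns by (simp add: K_def)
  also have "\<dots> = K (int (rowlen lam t 1)) *
      (\<Prod>d\<in>{1..rowlen lam t 1}. K (int d - int (collen lam t d) - 1) / K (int d - int (collen lam t d)))"
    by (rule prod_columns_second_ratio_telescope[OF nz])
  finally show ?thesis
    by (simp add: K_def power_int_of_nat algebra_simps)
qed

lemma cross_pairs_product:
  "(\<Prod>(i, j, s)\<in>diagram lam. \<Prod>t\<in>{s<..r}. node_residue (i, j, s) - Qv t) *
   (\<Prod>(y, x)\<in>cross_pairs lam. swap_ratio (node_residue y) (node_residue x))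
    = (\<Prod>(i, j, s)\<in>diagram lam. \<Prod>t\<in>{s<..r}.
        (qv powi (int j - int i) * Qv s - qv ^ rowlen lam t 1 * Qv t) *
        (\<Prod>k\<in>{1..rowlen lam t 1}.
           (qv powi (int j - int i) * Qv s - qv powi (int k - 1 - int (collen lam t k)) * Qv t) /
           (qv powi (int j - int i) * Qv s - qv powi (int k - int (collen lam t k)) * Qv t)))"
proof -
  have node: "(\<Prod>t\<in>{s<..r}. node_residue (i, j, s) - Qv t) *
      (\<Prod>t\<in>{s<..r}. \<Prod>x\<in>component_diagram lam t. swap_ratio (node_residue (i, j, s)) (node_residue x))
    = (\<Prod>t\<in>{s<..r}.
        (qv powi (int j - int i) * Qv s - qv ^ rowlen lam t 1 * Qv t) *
        (\<Prod>k\<in>{1..rowlen lam t 1}.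
           (qv powi (int j - int i) * Qv s - qv powi (int k - 1 - int (collen lam t k)) * Qv t) /
           (qv powi (int j - int i) * Qv s - qv powi (int k - int (collen lam t k)) * Qv t)))"
    if "(i, j, s) \<in> diagram lam" for i j s
    unfolding prod.distrib[symmetric]
    by (rule prod.cong[OF refl]) (use that in \<open>simp add: cross_component_product node_residue_eq\<close>)
  show ?thesis
    unfolding prod_cross_pairs_by_components prod.distrib[symmetric]
    by (rule prod.cong[OF refl]) (auto simp: node)
qed

end

theorem lemma5p15:
  fixes r n :: nat and lam :: "nat list list" and g :: "tableau \<Rightarrow> ratfun"
  assumes "1 \<le> n" and "1 \<le> r"
    and "is_multipartition r n lam"
    and "is_gamma lam n g"
  shows "g (t_col lam) = gamma_formula lam n"
proof -
  interpret multipartition r n lam using assms(3) by (rule multipartition.intro)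
  have "g (t_col lam) = gamma_init lam *
      (\<Prod>(y, x)\<in>inversions lam (t_col lam). swap_factor (node_residue y) (node_residue x))"
    using gamma_eq_prod_inversions[OF assms(4) std_t_col] .
  also have "\<dots> = qv ^ coxeter_length n (w_lam lam) *
      ((qfact_mp lam * (\<Prod>(y, x)\<in>hook_pairs lam. swap_ratio (node_residue y) (node_residue x))) *
       ((\<Prod>(i, j, s)\<in>diagram lam. \<Prod>t\<in>{s<..r}. node_residue (i, j, s) - Qv t) *
        (\<Prod>(y, x)\<in>cross_pairs lam. swap_ratio (node_residue y) (node_residue x))))"
    unfolding gamma_init_eq_prod_diagram prod_swap_factor_t_col by (simp only: ac_simps)
  also have "\<dots> = gamma_formula lam n"
    unfolding hook_length_product cross_pairs_product gamma_formula_def length_lam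
    by (simp add: prod.distrib[symmetric] split_def)
  finally show ?thesis .
qed

end
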